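(* For every $n\ge 4$, $$h_3(n,\{(4,0),(4,1),(4,3)\}) = \begin{cases} \dfrac{n}{2} & \text{if } n\equiv 0 \pmod 6,\\[2mm] \left\lceil \dfrac{n+1}{2}\right\rceil & \text{if } n\not\equiv 0 \pmod 6.\end{cases}$$
   Context: For an $r$-uniform hypergraph ($r$-graph) $H$, a homogeneous set is a set of vertices that is either a clique (every $r$-subset is an edge) or a coclique (no $r$-subset is an edge); $h(H)$ denotes the size of a largest homogeneous set. An $(m,f)$-graph is an $r$-graph with $m$ vertices and $f$ edges; $H$ is $(m,f)$-free if it contains no induced sub-hypergraph that is an $(m,f)$-graph. For a set $Q$ of pairs $(m,f)$, $H$ is $Q$-free if it is $(m,f)$-free for every $(m,f)\in Q$. $h_r(n,Q)$ is the minimum of $h(H)$ over all $n$-vertex $Q$-free $r$-graphs $H$. *)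

theory Defs
  imports Complex_Main
begin

definition uniform_hypergraph :: "nat \<Rightarrow> 'a set \<Rightarrow> 'a set set \<Rightarrow> bool" where
  "uniform_hypergraph r V E \<longleftrightarrow> finite V \<and> (\<forall>S\<in>E. S \<subseteq> V \<and> card S = r)"

definition homogeneous :: "nat \<Rightarrow> 'a set \<Rightarrow> 'a set set \<Rightarrow> 'a set \<Rightarrow> bool" where
  "homogeneous r V E X \<longleftrightarrow> X \<subseteq> V \<and>
     ((\<forall>S. S \<subseteq> X \<and> card S = r \<longrightarrow> S \<in> E) \<or> (\<forall>S. S \<subseteq> X \<and> card S = r \<longrightarrow> S \<notin> E))"

definition hom_number :: "nat \<Rightarrow> 'a set \<Rightarrow> 'a set set \<Rightarrow> nat" where
  "hom_number r V E = Max {card X | X. homogeneous r V E X}"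

definition mf_free :: "'a set \<Rightarrow> 'a set set \<Rightarrow> nat \<Rightarrow> nat \<Rightarrow> bool" where
  "mf_free V E m f \<longleftrightarrow> \<not> (\<exists>M. M \<subseteq> V \<and> card M = m \<and> card {S\<in>E. S \<subseteq> M} = f)"

definition Q_free :: "'a set \<Rightarrow> 'a set set \<Rightarrow> (nat \<times> nat) set \<Rightarrow> bool" where
  "Q_free V E Q \<longleftrightarrow> (\<forall>(m,f)\<in>Q. mf_free V E m f)"

text \<open>h_r(n,Q): minimum of h(H) over n-vertex Q-free r-graphs H. Every n-vertex
  r-graph is isomorphic to one on vertex set {0..<n}, so we range over those.\<close>
definition h_rnQ :: "nat \<Rightarrow> nat \<Rightarrow> (nat \<times> nat) set \<Rightarrow> nat" where
  "h_rnQ r n Q = Min {hom_number r {0..<n} E | E.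
      uniform_hypergraph r {0..<n} E \<and> Q_free {0..<n} E Q}"

end

theory Submission
  imports Defs
begin

text \<open>Fix a vertex v of a \{(4,0),(4,1),(4,3)\}-free 3-graph and let \<open>colink\<close> be the
  graph on the remaining vertices whose edges are the pairs xy with vxy a non-edge. The 4-sets through v
  show that \<open>colink\<close> is triangle-free and that a triple avoiding v is an edge exactly when it does not
  span precisely one \<open>colink\<close>-edge; the 4-sets avoiding v show that any two disjoint
  \<open>colink\<close>-edges are joined by a \<open>colink\<close>-edge. Hence independent sets together with v, and sets
  without a triple spanning exactly one \<open>colink\<close>-edge, are cliques of the 3-graph. Without an induced
  5-cycle, the neighbourhood and the non-neighbourhood of a vertex of maximum degree are both
  independent, so one of them gives a clique with at least (n+1)/2 vertices. An induced 5-cycle splits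
  the vertices into the common neighbourhoods of its five pairs at distance two and the vertices with
  no neighbour on it; ten cliques built from these parts have total size at least 5n, and equality
  forces the five common neighbourhoods to have the same size and n to be divisible by 6.

  On \{0..<n\} let a triple be an edge unless its residues mod 6 are distinct and are not a
  block of a fixed 2-(6,3,2) design. Cocliques have at most 3 vertices, and a clique meets at most
  three residue classes, which moreover are not the classes 0, 1, 2 (the large ones when
  n mod 6 = 3).\<close>

lemma card_edges_within_4set:
  assumes "\<forall>S\<in>E. card S = 3"
    and "a \<noteq> b" "a \<noteq> c" "a \<noteq> d" "b \<noteq> c" "b \<noteq> d" "c \<noteq> d"
  shows "card {S\<in>E. S \<subseteq> {a,b,c,d}} =
    of_bool ({a,b,c} \<in> E) + of_bool ({a,b,d} \<in> E) + of_bool ({a,c,d} \<in> E) + of_bool ({b,c,d} \<in> E)"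
proof -
  let ?F = "{{a,b,c},{a,b,d},{a,c,d},{b,c,d}}"
  have in_F: "S \<in> ?F" if S: "S \<subseteq> {a,b,c,d}" "card S = 3" for S
  proof -
    have "finite S" using S(2) card.infinite by fastforce
    hence "card ({a,b,c,d} - S) = 1" using card_Diff_subset[OF _ S(1)] S(2) assms(2-) by simp
    then obtain x where x: "{a,b,c,d} - S = {x}" using card_1_singletonE by blast
    hence "S = {a,b,c,d} - {x}" "x \<in> {a,b,c,d}" using S(1) by blast+
    thus ?thesis using assms(2-) by auto
  qed
  have "{S\<in>E. S \<subseteq> {a,b,c,d}} = {T\<in>?F. T \<in> E}"
    using in_F assms(1) by auto
  moreover have "card {T\<in>?F. T \<in> E} = (\<Sum>T\<in>?F. if T \<in> E then 1 else 0)"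
    by (simp add: sum.inter_filter[symmetric])
  moreover have "{a,b,c} \<notin> {{a,b,d},{a,c,d},{b,c,d}}" "{a,b,d} \<notin> {{a,c,d},{b,c,d}}"
    "{a,c,d} \<notin> {{b,c,d}}"
    using assms(2-) by (auto simp: set_eq_iff)
  ultimately show ?thesis by simp
qed

lemma card_4_elim:
  assumes "card M = 4"
  obtains a b c d where "M = {a,b,c,d}" "a \<noteq> b" "a \<noteq> c" "a \<noteq> d" "b \<noteq> c" "b \<noteq> d" "c \<noteq> d"
proof -
  from assms obtain a B where "M = insert a B" "a \<notin> B" "card B = 3"
    using card_Suc_eq[of M 3] by (auto simp: numeral_eq_Suc)
  moreover then obtain b c d where "B = {b,c,d}" "b \<noteq> c" "c \<noteq> d" "b \<noteq> d"
    by (auto simp: card_3_iff)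
  ultimately show ?thesis using that by auto
qed

lemma finite_homogeneous_cards:
  assumes "finite V"
  shows "finite {card X | X. homogeneous r V E X}"
proof -
  have "{card X | X. homogeneous r V E X} \<subseteq> card ` Pow V"
    by (auto simp: homogeneous_def)
  thus ?thesis using assms finite_subset by blast
qed

lemma hom_number_ge:
  assumes "finite V" "homogeneous r V E X"
  shows "card X \<le> hom_number r V E"
  unfolding hom_number_def using assms finite_homogeneous_cards by (intro Max_ge) auto

lemma hom_number_le:
  assumes "finite V" "\<And>X. homogeneous r V E X \<Longrightarrow> card X \<le> m"
  shows "hom_number r V E \<le> m"
proof -
  have "homogeneous r V E {}" unfolding homogeneous_def by auto
  thus ?thesis unfolding hom_number_def using assms finite_homogeneous_cards
    by (intro Max.boundedI) auto
qed

definition h_bound :: "nat \<Rightarrow> nat" where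
  "h_bound n = (if n mod 6 = 0 then n div 2 else n div 2 + 1)"

lemma h_bound_le_of_C5_system:
  fixes n i a b c d e H :: nat
  assumes "n \<le> 1 + i + a + b + c + d + e"
    "1 + i + a + c \<le> H" "1 + i + b + d \<le> H" "1 + i + c + e \<le> H" "1 + i + d + a \<le> H"
    "1 + i + e + b \<le> H"
    "a + b + c \<le> H" "b + c + d \<le> H" "c + d + e \<le> H" "d + e + a \<le> H" "e + a + b \<le> H"
  shows "h_bound n \<le> H"
proof (cases "n div 2 + 1 \<le> H")
  case False
  have "n \<le> 2 * H" using assms by linarith
  hence n: "2 * H = n" using False by linarith
  hence "a = b \<and> b = c \<and> c = d \<and> d = e \<and> 1 + i = a" using assms by linarith
  hence "n mod 6 = 0" using n assms by presburger
  thus ?thesis unfolding h_bound_def using n by simp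
qed (auto simp: h_bound_def)

lemma h_bound_ge_if_residues_bounded:
  fixes n x c k :: nat
  assumes "x \<le> c * (n div 6) + k" "c \<le> 3" "k \<le> c" "k \<le> n mod 6"
    and "c = 3 \<and> n mod 6 = 3 \<longrightarrow> k \<le> 2"
  shows "x \<le> h_bound n"
proof -
  have "n = n mod 6 + 6 * (n div 6)" by simp
  hence h: "h_bound n = (if n mod 6 = 0 then 3 * (n div 6) else 3 * (n div 6) + n mod 6 div 2 + 1)"
    unfolding h_bound_def by presburger
  have "n mod 6 < 6" by simp
  hence "n mod 6 \<in> {0,1,2,3,4,5}" "c \<in> {0,1,2,3}" using assms(2) by auto
  thus ?thesis unfolding h using assms by (elim insertE emptyE) (simp_all, linarith?)
qed

lemma Q013_free_iff:
  "Q_free V E {(4,0),(4,1),(4,3)} \<longleftrightarrow>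
    (\<forall>M. M \<subseteq> V \<and> card M = 4 \<longrightarrow> card {S\<in>E. S \<subseteq> M} \<notin> {0,1,3})"
  unfolding Q_free_def mf_free_def by auto

section \<open>The lower bound\<close>

locale Q013_free =
  fixes V :: "'a set" and E :: "'a set set"
  assumes uniform: "uniform_hypergraph 3 V E"
    and free: "Q_free V E {(4,0),(4,1),(4,3)}"
begin

lemma finite_V: "finite V"
  using uniform unfolding uniform_hypergraph_def by blast

lemma edge_card: "S \<in> E \<Longrightarrow> card S = 3"
  using uniform unfolding uniform_hypergraph_def by auto

lemma card_edges_within_4set_not_013:
  "M \<subseteq> V \<Longrightarrow> card M = 4 \<Longrightarrow> card {S\<in>E. S \<subseteq> M} \<notin> {0,1,3}"
  using free unfolding Q013_free_iff by blast

lemma coclique_card_le_3: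
  assumes "X \<subseteq> V" "\<forall>S. S \<subseteq> X \<and> card S = 3 \<longrightarrow> S \<notin> E"
  shows "card X \<le> 3"
proof (rule ccontr)
  assume "\<not> card X \<le> 3"
  then obtain M where M: "M \<subseteq> X" "card M = 4"
    using obtain_subset_with_card_n[of 4 X] by auto
  have empty: "{S\<in>E. S \<subseteq> M} = {}" using M(1) assms(2) edge_card by blast
  have "M \<subseteq> V" using M(1) assms(1) by blast
  from card_edges_within_4set_not_013[OF this M(2)] show False unfolding empty by simp
qed

end

locale rooted_Q013_free = Q013_free +
  fixes v :: 'a
  assumes v_in_V: "v \<in> V"
begin

definition W :: "'a set" where
  "W = V - {v}"

definition colink :: "'a \<Rightarrow> 'a \<Rightarrow> bool" where
  "colink x y \<longleftrightarrow> x \<in> W \<and> y \<in> W \<and> x \<noteq> y \<and> {v,x,y} \<notin> E"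

lemma finite_W: "finite W"
  unfolding W_def using finite_V by simp

lemma card_W: "card W = card V - 1"
  unfolding W_def using finite_V v_in_V by simp

lemma colink_sym: "colink x y \<longleftrightarrow> colink y x"
  unfolding colink_def by (auto simp: insert_commute)

lemma colink_W: "colink x y \<Longrightarrow> x \<in> W \<and> y \<in> W"
  and colink_neq: "colink x y \<Longrightarrow> x \<noteq> y"
  unfolding colink_def by auto

lemma colink_count_through_v:
  assumes "a \<in> W" "b \<in> W" "c \<in> W" "a \<noteq> b" "a \<noteq> c" "b \<noteq> c"
  shows "of_bool (\<not> colink a b) + of_bool (\<not> colink a c) + of_bool (\<not> colink b c)
    + of_bool ({a,b,c} \<in> E) \<notin> {0,1,3::nat}"
proof -
  have v: "v \<noteq> a" "v \<noteq> b" "v \<noteq> c" using assms(1-3) unfolding W_def by auto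
  have "card {S\<in>E. S \<subseteq> {v,a,b,c}} =
      of_bool ({v,a,b} \<in> E) + of_bool ({v,a,c} \<in> E) + of_bool ({v,b,c} \<in> E) + of_bool ({a,b,c} \<in> E)"
    using v assms edge_card by (intro card_edges_within_4set) auto
  moreover have "card {S\<in>E. S \<subseteq> {v,a,b,c}} \<notin> {0,1,3}"
    using assms v v_in_V by (intro card_edges_within_4set_not_013) (auto simp: W_def)
  moreover have "({v,a,b} \<in> E) = (\<not> colink a b)" "({v,a,c} \<in> E) = (\<not> colink a c)"
    "({v,b,c} \<in> E) = (\<not> colink b c)"
    using assms unfolding colink_def by auto
  ultimately show ?thesis by simp
qed

lemma colink_triangle_free: "colink a b \<Longrightarrow> colink a c \<Longrightarrow> colink b c \<Longrightarrow> False"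
  using colink_count_through_v[of a b c] colink_W colink_neq by fastforce

lemma colink_common_nbr: "colink x w \<Longrightarrow> colink y w \<Longrightarrow> \<not> colink x y"
  using colink_triangle_free colink_sym by blast

lemma edge_iff_colink_count:
  assumes "a \<in> W" "b \<in> W" "c \<in> W" "a \<noteq> b" "a \<noteq> c" "b \<noteq> c"
  shows "{a,b,c} \<in> E \<longleftrightarrow> of_bool (colink a b) + of_bool (colink a c) + of_bool (colink b c) \<noteq> (1::nat)"
  using colink_count_through_v[OF assms] colink_triangle_free[of a b c]
  by (cases "colink a b"; cases "colink a c"; cases "colink b c") auto

lemma disjoint_colink_edges_joined:
  assumes ab: "colink a b" and cd: "colink c d" and "a \<noteq> c" "a \<noteq> d" "b \<noteq> c" "b \<noteq> d"
  shows "colink a c \<or> colink a d \<or> colink b c \<or> colink b d"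
proof (rule ccontr)
  assume none: "\<not> ?thesis"
  have W: "a \<in> W" "b \<in> W" "c \<in> W" "d \<in> W" and "a \<noteq> b" "c \<noteq> d"
    using ab cd colink_W colink_neq by auto
  have "{a,b,c} \<notin> E" "{a,b,d} \<notin> E" "{a,c,d} \<notin> E" "{b,c,d} \<notin> E"
    using edge_iff_colink_count[of a b c] edge_iff_colink_count[of a b d]
      edge_iff_colink_count[of a c d] edge_iff_colink_count[of b c d]
      W assms none colink_sym \<open>a \<noteq> b\<close> \<open>c \<noteq> d\<close> by auto
  hence "card {S\<in>E. S \<subseteq> {a,b,c,d}} = 0"
    using card_edges_within_4set[of E a b c d] edge_card assms \<open>a \<noteq> b\<close> \<open>c \<noteq> d\<close> by simp
  moreover have "card {S\<in>E. S \<subseteq> {a,b,c,d}} \<notin> {0,1,3}"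
    using W assms \<open>a \<noteq> b\<close> \<open>c \<noteq> d\<close> by (intro card_edges_within_4set_not_013) (auto simp: W_def)
  ultimately show False by simp
qed

lemma clique_in_W:
  assumes "S \<subseteq> W"
    and "\<And>a b c. a \<in> S \<Longrightarrow> b \<in> S \<Longrightarrow> c \<in> S \<Longrightarrow> a \<noteq> b \<Longrightarrow> a \<noteq> c \<Longrightarrow> b \<noteq> c \<Longrightarrow>
      of_bool (colink a b) + of_bool (colink a c) + of_bool (colink b c) \<noteq> (1::nat)"
  shows "homogeneous 3 V E S"
  unfolding homogeneous_def
proof (intro conjI disjI1 allI impI)
  show "S \<subseteq> V" using assms(1) by (auto simp: W_def)
  fix T assume "T \<subseteq> S \<and> card T = 3"
  then obtain a b c where "T = {a,b,c}" "a \<noteq> b" "b \<noteq> c" "a \<noteq> c" "a \<in> S" "b \<in> S" "c \<in> S"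
    by (auto simp: card_3_iff)
  thus "T \<in> E" using edge_iff_colink_count[of a b c] assms by auto
qed

lemma clique_insert_v:
  assumes S: "S \<subseteq> W" and indep: "\<And>a b. a \<in> S \<Longrightarrow> b \<in> S \<Longrightarrow> \<not> colink a b"
  shows "homogeneous 3 V E (insert v S)"
  unfolding homogeneous_def
proof (intro conjI disjI1 allI impI)
  show "insert v S \<subseteq> V" using S v_in_V by (auto simp: W_def)
  have through_v: "{v,x,y} \<in> E" if "x \<in> S" "y \<in> S" "x \<noteq> y" for x y
    using that S indep[of x y] by (auto simp: colink_def)
  fix T assume "T \<subseteq> insert v S \<and> card T = 3"
  then obtain a b c where T: "T = {a,b,c}" "a \<noteq> b" "b \<noteq> c" "a \<noteq> c"
      "a \<in> insert v S" "b \<in> insert v S" "c \<in> insert v S"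
    by (auto simp: card_3_iff)
  show "T \<in> E"
  proof (cases "v \<in> T")
    case False
    hence "a \<in> S" "b \<in> S" "c \<in> S" using T by auto
    hence "a \<in> W" "b \<in> W" "c \<in> W" "\<not> colink a b" "\<not> colink a c" "\<not> colink b c"
      using S indep by auto
    thus ?thesis using T edge_iff_colink_count[of a b c] by simp
  next
    case True
    then consider "a = v" | "b = v" | "c = v" using T by auto
    thus ?thesis
      using T through_v[of b c] through_v[of a c] through_v[of a b]
      by cases (auto simp: insert_commute)
  qed
qed

definition nbrs :: "'a \<Rightarrow> 'a set" where
  "nbrs x = {y. colink x y}"

lemma nbrs_subset_W: "nbrs x \<subseteq> W"
  unfolding nbrs_def using colink_W by auto

lemma finite_nbrs: "finite (nbrs x)"
  using finite_subset[OF nbrs_subset_W finite_W] .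

definition induced_C5 :: "'a \<Rightarrow> 'a \<Rightarrow> 'a \<Rightarrow> 'a \<Rightarrow> 'a \<Rightarrow> bool" where
  "induced_C5 a b c d e \<longleftrightarrow> colink a b \<and> colink b c \<and> colink c d \<and> colink d e \<and> colink e a \<and>
     \<not> colink a c \<and> \<not> colink a d \<and> \<not> colink b d \<and> \<not> colink b e \<and> \<not> colink c e"

lemma colink_nbrs_nested:
  assumes no_C5: "\<not> (\<exists>a b c d e. induced_C5 a b c d e)"
    and xy: "colink x y" and ux: "\<not> colink u x" and uy: "\<not> colink u y"
  shows "nbrs u \<subseteq> nbrs x \<or> nbrs u \<subseteq> nbrs y"
proof (rule ccontr)
  assume "\<not> ?thesis"
  then obtain w1 w2 where w: "colink u w1" "\<not> colink x w1" "colink u w2" "\<not> colink y w2"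
    unfolding nbrs_def by blast
  have "x \<noteq> u" "y \<noteq> u" "w1 \<noteq> x" "w1 \<noteq> y" "w2 \<noteq> x" "w2 \<noteq> y"
    using w xy ux uy colink_sym by auto
  hence "colink w1 y" "colink w2 x"
    using disjoint_colink_edges_joined[OF w(1) xy] disjoint_colink_edges_joined[OF w(3), of y x]
      xy ux uy w colink_sym by auto
  hence "induced_C5 u w1 y x w2"
    unfolding induced_C5_def using w xy ux uy colink_common_nbr colink_sym by meson
  thus False using no_C5 by blast
qed

lemma non_nbrs_of_max_degree_independent:
  assumes no_C5: "\<not> (\<exists>a b c d e. induced_C5 a b c d e)"
    and u_max: "\<And>x. x \<in> W \<Longrightarrow> card (nbrs x) \<le> card (nbrs u)"
    and x: "x \<notin> nbrs u" and y: "y \<notin> nbrs u"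
  shows "\<not> colink x y"
proof
  have no_larger: False if pq: "colink p q" "q \<notin> nbrs u" "nbrs u \<subseteq> nbrs p" for p q
  proof -
    have "insert q (nbrs u) \<subseteq> nbrs p" using pq unfolding nbrs_def by auto
    hence "card (insert q (nbrs u)) \<le> card (nbrs p)" by (rule card_mono[OF finite_nbrs])
    hence "Suc (card (nbrs u)) \<le> card (nbrs p)" using finite_nbrs pq(2) by simp
    thus False using u_max[of p] pq(1) colink_W by fastforce
  qed
  assume xy: "colink x y"
  have "\<not> colink u x" "\<not> colink u y" using x y unfolding nbrs_def by auto
  from colink_nbrs_nested[OF no_C5 xy this] show False
    using no_larger[of x y] no_larger[of y x] xy x y colink_sym by blast
qed

lemma large_clique_without_C5:
  assumes no_C5: "\<not> (\<exists>a b c d e. induced_C5 a b c d e)" and "W \<noteq> {}"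
  obtains X where "homogeneous 3 V E X" "card V + 1 \<le> 2 * card X"
proof -
  have "Max ((\<lambda>x. card (nbrs x)) ` W) \<in> (\<lambda>x. card (nbrs x)) ` W"
    using finite_W assms(2) by (intro Max_in) auto
  then obtain u where "u \<in> W" "card (nbrs u) = Max ((\<lambda>x. card (nbrs x)) ` W)" by auto
  hence u_max: "\<And>x. x \<in> W \<Longrightarrow> card (nbrs x) \<le> card (nbrs u)"
    using finite_W by simp
  let ?N = "nbrs u" and ?M = "W - nbrs u"
  have hom_N: "homogeneous 3 V E (insert v ?N)"
    using nbrs_subset_W colink_common_nbr colink_sym unfolding nbrs_def
    by (intro clique_insert_v) blast+
  have hom_M: "homogeneous 3 V E (insert v ?M)"
    using non_nbrs_of_max_degree_independent[OF no_C5 u_max] by (intro clique_insert_v) auto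
  have "card ?N + card ?M = card W"
    using card_Diff_subset[OF finite_nbrs nbrs_subset_W, of u] card_mono[OF finite_W nbrs_subset_W, of u]
    by linarith
  moreover have "v \<notin> ?N" "v \<notin> ?M" using nbrs_subset_W[of u] unfolding W_def by auto
  hence "card (insert v ?N) = Suc (card ?N)" "card (insert v ?M) = Suc (card ?M)"
    using finite_nbrs finite_W by simp_all
  moreover have "card V \<ge> 1" using v_in_V finite_V card_0_eq by fastforce
  ultimately have "card V + 1 \<le> 2 * card (insert v ?N) \<or> card V + 1 \<le> 2 * card (insert v ?M)"
    using card_W by linarith
  thus ?thesis using that hom_N hom_M by blast
qed

definition common_nbrs :: "'a \<Rightarrow> 'a \<Rightarrow> 'a set" where
  "common_nbrs p q = {x. colink x p \<and> colink x q}"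

definition C5_isolated :: "'a \<Rightarrow> 'a \<Rightarrow> 'a \<Rightarrow> 'a \<Rightarrow> 'a \<Rightarrow> 'a set" where
  "C5_isolated a b c d e =
    {x\<in>W. \<not> colink x a \<and> \<not> colink x b \<and> \<not> colink x c \<and> \<not> colink x d \<and> \<not> colink x e}"

lemma induced_C5_rotate: "induced_C5 a b c d e \<Longrightarrow> induced_C5 b c d e a"
  unfolding induced_C5_def by (simp add: colink_sym)

lemma C5_isolated_rotate: "C5_isolated b c d e a = C5_isolated a b c d e"
  unfolding C5_isolated_def by auto

lemma finite_common_nbrs: "finite (common_nbrs p q)"
  and finite_C5_isolated: "finite (C5_isolated a b c d e)"
  unfolding common_nbrs_def C5_isolated_def
  by (intro finite_subset[OF _ finite_W], auto dest: colink_W)+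

lemma common_nbrs_complete:
  assumes C5: "induced_C5 a b c d e" and x: "x \<in> common_nbrs e b" and y: "y \<in> common_nbrs a c"
  shows "colink x y"
proof -
  have k: "colink x e" "colink x b" "colink y a" "colink y c"
    using x y unfolding common_nbrs_def by auto
  have c: "colink a b" "colink b c" "colink c d" "colink d e" "colink e a"
    "\<not> colink a c" "\<not> colink b e" "\<not> colink c e"
    using C5 unfolding induced_C5_def by auto
  have "\<not> colink x c" "\<not> colink e y" using k c colink_triangle_free colink_sym by metis+
  moreover have "x \<noteq> y" "x \<noteq> c" "e \<noteq> y" "x \<noteq> e" "y \<noteq> c" "e \<noteq> c"
    using k c colink_triangle_free colink_neq colink_sym by metis+
  ultimately show ?thesis
    using disjoint_colink_edges_joined[OF k(1) k(4)] c colink_sym by metis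
qed

lemma common_nbrs_disjoint:
  assumes "induced_C5 a b c d e"
  shows "common_nbrs e b \<inter> common_nbrs a c = {}" "common_nbrs e b \<inter> common_nbrs b d = {}"
  using assms colink_triangle_free colink_sym unfolding common_nbrs_def induced_C5_def by blast+

lemma C5_isolated_disjoint_common_nbrs:
  "C5_isolated a b c d e \<inter> common_nbrs p b = {}" "C5_isolated a b c d e \<inter> common_nbrs p d = {}"
  unfolding common_nbrs_def C5_isolated_def using colink_sym by auto

lemma C5_isolated_not_colink_common_nbrs:
  assumes C5: "induced_C5 a b c d e" and p: "p \<in> C5_isolated a b c d e"
    and q: "q \<in> common_nbrs e b \<union> common_nbrs b d"
  shows "\<not> colink p q"
proof
  assume pq: "colink p q"
  have p_iso: "\<not> colink p a" "\<not> colink p b" "\<not> colink p c" "\<not> colink p d" "\<not> colink p e"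
    using p unfolding C5_isolated_def by auto
  have c: "colink a b" "colink b c" "colink c d" "colink d e" "colink e a"
    "\<not> colink b d" "\<not> colink b e" "\<not> colink c e" "\<not> colink a d"
    using C5 unfolding induced_C5_def by auto
  show False
  proof (cases "q \<in> common_nbrs e b")
    case True
    hence "colink q e" "colink q b" unfolding common_nbrs_def by auto
    moreover from this have "p \<noteq> c" "p \<noteq> d" "q \<noteq> c" "q \<noteq> d" using p_iso c colink_sym by metis+
    ultimately show False
      using disjoint_colink_edges_joined[OF pq c(3)] p_iso c colink_triangle_free colink_sym by metis
  next
    case False
    hence "colink q b" "colink q d" using q unfolding common_nbrs_def by auto
    moreover from this have "p \<noteq> e" "p \<noteq> a" "q \<noteq> e" "q \<noteq> a" using p_iso c colink_sym by metis+
    ultimately show False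
      using disjoint_colink_edges_joined[OF pq c(5)] p_iso c colink_triangle_free colink_sym by metis
  qed
qed

lemma C5_isolated_independent:
  assumes "induced_C5 a b c d e" "x \<in> C5_isolated a b c d e" "y \<in> C5_isolated a b c d e"
  shows "\<not> colink x y"
proof
  assume xy: "colink x y"
  have "colink a b" using assms(1) unfolding induced_C5_def by auto
  moreover have "\<not> colink x a" "\<not> colink x b" "\<not> colink y a" "\<not> colink y b"
    using assms(2,3) unfolding C5_isolated_def by auto
  moreover from calculation have "x \<noteq> a" "x \<noteq> b" "y \<noteq> a" "y \<noteq> b" using colink_sym by metis+
  ultimately show False using disjoint_colink_edges_joined[OF xy] by blast
qed

lemma C5_clique_through_v:
  assumes C5: "induced_C5 a b c d e"
  shows "1 + card (C5_isolated a b c d e) + card (common_nbrs e b) + card (common_nbrs b d)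
    \<le> hom_number 3 V E"
proof -
  let ?S = "C5_isolated a b c d e \<union> common_nbrs e b \<union> common_nbrs b d"
  have S: "?S \<subseteq> W" using colink_W unfolding C5_isolated_def common_nbrs_def by auto
  have "\<not> colink x y" if "x \<in> ?S" "y \<in> ?S" for x y
    using that C5_isolated_independent[OF C5, of x y] C5_isolated_not_colink_common_nbrs[OF C5, of x y]
      C5_isolated_not_colink_common_nbrs[OF C5, of y x] colink_common_nbr[of x b y] colink_sym
    unfolding common_nbrs_def by blast
  hence "homogeneous 3 V E (insert v ?S)" using S by (intro clique_insert_v) auto
  hence "card (insert v ?S) \<le> hom_number 3 V E" by (rule hom_number_ge[OF finite_V])
  moreover have "v \<notin> ?S" using S by (auto simp: W_def)
  moreover have "card ?S = card (C5_isolated a b c d e) + card (common_nbrs e b) + card (common_nbrs b d)"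
    using finite_common_nbrs finite_C5_isolated C5_isolated_disjoint_common_nbrs
      common_nbrs_disjoint(2)[OF C5]
    by (simp add: card_Un_disjoint Int_Un_distrib Int_Un_distrib2)
  ultimately show ?thesis using finite_common_nbrs finite_C5_isolated by simp
qed

lemma colink_across_common_nbrs:
  assumes C5: "induced_C5 a b c d e"
    and p: "p \<in> common_nbrs e b \<union> common_nbrs a c \<union> common_nbrs b d"
    and q: "q \<in> common_nbrs e b \<union> common_nbrs a c \<union> common_nbrs b d"
  shows "colink p q \<longleftrightarrow> (p \<in> common_nbrs a c) \<noteq> (q \<in> common_nbrs a c)"
proof -
  have C5': "induced_C5 b c d e a" using induced_C5_rotate[OF C5] .
  have across: "colink x y" if "x \<in> common_nbrs a c" "y \<notin> common_nbrs a c"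
    "y \<in> common_nbrs e b \<union> common_nbrs a c \<union> common_nbrs b d" for x y
    using that common_nbrs_complete[OF C5 _ that(1)] common_nbrs_complete[OF C5' that(1)] colink_sym
    by blast
  have "\<not> colink p q" if "(p \<in> common_nbrs a c) = (q \<in> common_nbrs a c)"
    using that p q colink_common_nbr[of p a q] colink_common_nbr[of p b q]
    unfolding common_nbrs_def by auto
  thus ?thesis using across p q colink_sym by blast
qed

lemma C5_clique_avoiding_v:
  assumes C5: "induced_C5 a b c d e"
  shows "card (common_nbrs e b) + card (common_nbrs a c) + card (common_nbrs b d) \<le> hom_number 3 V E"
proof -
  let ?T = "common_nbrs e b \<union> common_nbrs a c \<union> common_nbrs b d"
  have "?T \<subseteq> W" using colink_W unfolding common_nbrs_def by auto
  hence "homogeneous 3 V E ?T"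
    by (rule clique_in_W) (simp only: colink_across_common_nbrs[OF C5], auto)
  hence "card ?T \<le> hom_number 3 V E" by (rule hom_number_ge[OF finite_V])
  moreover have "card ?T = card (common_nbrs e b) + card (common_nbrs a c) + card (common_nbrs b d)"
    using finite_common_nbrs common_nbrs_disjoint[OF C5]
      common_nbrs_disjoint(1)[OF induced_C5_rotate[OF C5]]
    by (simp add: card_Un_disjoint Int_Un_distrib Int_Un_distrib2)
  ultimately show ?thesis by simp
qed

lemma colink_nbr_of_C5_vertex:
  assumes C5: "induced_C5 a b c d e" and "colink x a"
  shows "x \<in> common_nbrs a c \<union> common_nbrs d a"
proof -
  have c: "colink c d" "\<not> colink a c" "\<not> colink a d" using C5 unfolding induced_C5_def by auto
  have "x \<noteq> c" "x \<noteq> d" "a \<noteq> c" "a \<noteq> d" using assms(2) c colink_sym by metis+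
  hence "colink x c \<or> colink x d" using disjoint_colink_edges_joined[OF assms(2) c(1)] c by blast
  thus ?thesis unfolding common_nbrs_def using assms(2) colink_sym by auto
qed

lemma C5_partition_cover:
  assumes C5: "induced_C5 a b c d e"
  shows "W \<subseteq> C5_isolated a b c d e \<union> common_nbrs e b \<union> common_nbrs a c \<union> common_nbrs b d
    \<union> common_nbrs c e \<union> common_nbrs d a"
proof
  fix x assume "x \<in> W"
  note rot = induced_C5_rotate
  show "x \<in> C5_isolated a b c d e \<union> common_nbrs e b \<union> common_nbrs a c \<union> common_nbrs b d
    \<union> common_nbrs c e \<union> common_nbrs d a"
    using \<open>x \<in> W\<close> colink_nbr_of_C5_vertex[OF C5, of x]
      colink_nbr_of_C5_vertex[OF rot[OF C5], of x]
      colink_nbr_of_C5_vertex[OF rot[OF rot[OF C5]], of x]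
      colink_nbr_of_C5_vertex[OF rot[OF rot[OF rot[OF C5]]], of x]
      colink_nbr_of_C5_vertex[OF rot[OF rot[OF rot[OF rot[OF C5]]]], of x]
    unfolding C5_isolated_def by blast
qed

lemma hom_number_ge_with_C5:
  assumes C5: "induced_C5 a b c d e"
  shows "h_bound (card V) \<le> hom_number 3 V E"
proof -
  have C5s: "induced_C5 b c d e a" "induced_C5 c d e a b" "induced_C5 d e a b c" "induced_C5 e a b c d"
    using induced_C5_rotate C5 by blast+
  let ?I = "C5_isolated a b c d e"
  have I: "C5_isolated b c d e a = ?I" "C5_isolated c d e a b = ?I" "C5_isolated d e a b c = ?I"
    "C5_isolated e a b c d = ?I"
    by (simp_all add: C5_isolated_rotate)
  have "card W \<le> card (?I \<union> common_nbrs e b \<union> common_nbrs a c \<union> common_nbrs b d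
      \<union> common_nbrs c e \<union> common_nbrs d a)"
    using C5_partition_cover[OF C5] finite_common_nbrs finite_C5_isolated by (intro card_mono) auto
  also have "\<dots> \<le> card ?I + card (common_nbrs e b) + card (common_nbrs a c) + card (common_nbrs b d)
      + card (common_nbrs c e) + card (common_nbrs d a)"
    by (intro order.trans[OF card_Un_le] add_mono order_refl)+
  finally have "card V \<le> 1 + card ?I + card (common_nbrs e b) + card (common_nbrs a c)
      + card (common_nbrs b d) + card (common_nbrs c e) + card (common_nbrs d a)"
    using card_W by linarith
  thus ?thesis
    by (rule h_bound_le_of_C5_system[OF _ C5_clique_through_v[OF C5]
          C5_clique_through_v[OF C5s(1), unfolded I] C5_clique_through_v[OF C5s(2), unfolded I]
          C5_clique_through_v[OF C5s(3), unfolded I] C5_clique_through_v[OF C5s(4), unfolded I]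
          C5_clique_avoiding_v[OF C5] C5_clique_avoiding_v[OF C5s(1)] C5_clique_avoiding_v[OF C5s(2)]
          C5_clique_avoiding_v[OF C5s(3)] C5_clique_avoiding_v[OF C5s(4)]])
qed

lemma hom_number_ge_h_bound_rooted: "h_bound (card V) \<le> hom_number 3 V E"
proof (cases "\<exists>a b c d e. induced_C5 a b c d e")
  case True
  thus ?thesis using hom_number_ge_with_C5 by blast
next
  case no_C5: False
  show ?thesis
  proof (cases "W = {}")
    case True
    hence "card V = 1" using card_W finite_V v_in_V card_0_eq by fastforce
    moreover have "homogeneous 3 V E {v}" using clique_insert_v[of "{}"] by simp
    ultimately show ?thesis using hom_number_ge[OF finite_V, of 3 E "{v}"] by (simp add: h_bound_def)
  next
    case False
    then obtain X where X: "homogeneous 3 V E X" "card V + 1 \<le> 2 * card X"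
      using large_clique_without_C5 no_C5 by blast
    have "h_bound (card V) \<le> card X" using X(2) unfolding h_bound_def by auto
    also have "\<dots> \<le> hom_number 3 V E" by (rule hom_number_ge[OF finite_V X(1)])
    finally show ?thesis .
  qed
qed

end

lemma (in Q013_free) hom_number_ge_h_bound: "h_bound (card V) \<le> hom_number 3 V E"
proof (cases "V = {}")
  case False
  then obtain v where "v \<in> V" by blast
  then interpret rooted_Q013_free V E v by unfold_locales
  show ?thesis by (rule hom_number_ge_h_bound_rooted)
qed (simp add: h_bound_def)

section \<open>The construction\<close>

text \<open>A 3-set of residues mod 6 is coded by the bitmask \<open>\<Sum>j\<in>T. 2^j\<close>; the codes below are those
  of the ten blocks 013, 024, 035, 014, 025, 123, 234, 345, 145, 125 of a 2-(6,3,2) design.\<close>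

definition design_codes :: "nat set" where
  "design_codes = {11, 21, 41, 19, 37, 14, 28, 56, 50, 38}"

definition design_block :: "nat \<Rightarrow> nat \<Rightarrow> nat \<Rightarrow> bool" where
  "design_block p q r \<longleftrightarrow> 2^p + 2^q + 2^r \<in> design_codes"

definition residue_edge :: "nat \<Rightarrow> nat \<Rightarrow> nat \<Rightarrow> bool" where
  "residue_edge p q r \<longleftrightarrow> p = q \<or> p = r \<or> q = r \<or> design_block p q r"

definition residue_graph :: "nat \<Rightarrow> nat set set" where
  "residue_graph n = {S. S \<subseteq> {0..<n} \<and> card S = 3 \<and>
     (card ((\<lambda>x. x mod 6) ` S) \<le> 2 \<or> (\<Sum>j\<in>(\<lambda>x. x mod 6) ` S. 2^j) \<in> design_codes)}"

lemma all_less_6: "(\<forall>p<(6::nat). P p) \<longleftrightarrow> P 0 \<and> P 1 \<and> P 2 \<and> P 3 \<and> P 4 \<and> P 5"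
proof -
  have "(p::nat) < 6 \<longleftrightarrow> p = 0 \<or> p = 1 \<or> p = 2 \<or> p = 3 \<or> p = 4 \<or> p = 5" for p by arith
  thus ?thesis by auto
qed

lemma residue_edge_count_not_013:
  "\<forall>p<6. \<forall>q<6. \<forall>r<6. \<forall>s<6. of_bool (residue_edge p q r) + of_bool (residue_edge p q s)
     + of_bool (residue_edge p r s) + of_bool (residue_edge q r s) \<notin> {0, 1, 3::nat}"
  unfolding all_less_6 residue_edge_def design_block_def design_codes_def by simp

lemma no_design_block_on_4_residues:
  "\<forall>p<6. \<forall>q<6. \<forall>r<6. \<forall>s<6. p \<noteq> q \<and> p \<noteq> r \<and> p \<noteq> s \<and> q \<noteq> r \<and> q \<noteq> s \<and> r \<noteq> s \<longrightarrow>
     \<not> (design_block p q r \<and> design_block p q s \<and> design_block p r s \<and> design_block q r s)"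
  unfolding all_less_6 design_block_def design_codes_def by simp

lemma not_design_block_below_3:
  assumes "p < 3" "q < 3" "r < 3" "p \<noteq> q" "p \<noteq> r" "q \<noteq> r"
  shows "\<not> design_block p q r"
proof -
  have "p \<in> {0,1,2}" "q \<in> {0,1,2}" "r \<in> {0,1,2}" using assms(1-3) by auto
  thus ?thesis using assms(4-6) unfolding design_block_def design_codes_def by auto
qed

lemma insert_mem_residue_graph:
  assumes "a < n" "b < n" "c < n" "a \<noteq> b" "a \<noteq> c" "b \<noteq> c"
  shows "{a,b,c} \<in> residue_graph n \<longleftrightarrow> residue_edge (a mod 6) (b mod 6) (c mod 6)"
proof (cases "a mod 6 = b mod 6 \<or> a mod 6 = c mod 6 \<or> b mod 6 = c mod 6")
  case True
  hence "card {a mod 6, b mod 6, c mod 6} \<le> 2" by (auto simp: card_insert_if)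
  thus ?thesis using True assms unfolding residue_graph_def residue_edge_def by auto
next
  case False
  thus ?thesis using assms
    unfolding residue_graph_def residue_edge_def design_block_def by (auto simp: add.assoc)
qed

lemma residue_graph_uniform: "uniform_hypergraph 3 {0..<n} (residue_graph n)"
  unfolding uniform_hypergraph_def residue_graph_def by auto

lemma residue_graph_Q_free: "Q_free {0..<n} (residue_graph n) {(4,0),(4,1),(4,3)}"
  unfolding Q013_free_iff
proof (intro allI impI)
  fix M assume M: "M \<subseteq> {0..<n} \<and> card M = 4"
  then obtain a b c d where abcd: "M = {a,b,c,d}" "a \<noteq> b" "a \<noteq> c" "a \<noteq> d" "b \<noteq> c" "b \<noteq> d" "c \<noteq> d"
    using card_4_elim by blast
  have "a < n" "b < n" "c < n" "d < n" using M abcd by auto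
  moreover have "card {S \<in> residue_graph n. S \<subseteq> M} =
      of_bool ({a,b,c} \<in> residue_graph n) + of_bool ({a,b,d} \<in> residue_graph n)
      + of_bool ({a,c,d} \<in> residue_graph n) + of_bool ({b,c,d} \<in> residue_graph n)"
    unfolding abcd(1) using abcd by (intro card_edges_within_4set) (auto simp: residue_graph_def)
  ultimately show "card {S \<in> residue_graph n. S \<subseteq> M} \<notin> {0,1,3}"
    using abcd residue_edge_count_not_013[rule_format, of "a mod 6" "b mod 6" "c mod 6" "d mod 6"]
    by (simp add: insert_mem_residue_graph)
qed

lemma card_residue_class:
  assumes "j < 6"
  shows "card {x. x < n \<and> x mod 6 = j} = n div 6 + of_bool (j < n mod 6)"
proof (induction n)
  case (Suc n)
  have "{x. x < Suc n \<and> x mod 6 = j} = {x. x < n \<and> x mod 6 = j} \<union> (if n mod 6 = j then {n} else {})"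
    by (auto simp: less_Suc_eq)
  hence "card {x. x < Suc n \<and> x mod 6 = j} = card {x. x < n \<and> x mod 6 = j} + of_bool (n mod 6 = j)"
    by (auto simp: card_Un_disjoint)
  also have "\<dots> = Suc n div 6 + of_bool (j < Suc n mod 6)"
  proof (cases "n mod 6 = 5")
    case True
    hence "Suc n mod 6 = 0" "Suc n div 6 = n div 6 + 1" by (simp_all add: mod_Suc div_Suc)
    thus ?thesis using Suc True assms by auto
  next
    case False
    have "n mod 6 < 6" by simp
    hence "Suc n mod 6 = Suc (n mod 6)" "Suc n div 6 = n div 6"
      using False by (simp_all add: mod_Suc div_Suc)
    thus ?thesis using Suc by auto
  qed
  finally show ?case .
qed simp

lemma card_le_residue_classes:
  assumes "X \<subseteq> {0..<n}"
  shows "card X \<le> card ((\<lambda>x. x mod 6) ` X) * (n div 6)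
    + card {j \<in> (\<lambda>x. x mod 6) ` X. j < n mod 6}"
proof -
  let ?C = "(\<lambda>x. x mod 6) ` X"
  have fin: "finite ?C" using finite_subset[OF assms] by simp
  have "X \<subseteq> (\<Union>j\<in>?C. {x. x < n \<and> x mod 6 = j})"
  proof
    fix x assume "x \<in> X"
    hence "x < n" "x mod 6 \<in> ?C" using assms by auto
    thus "x \<in> (\<Union>j\<in>?C. {x. x < n \<and> x mod 6 = j})" by blast
  qed
  moreover have "finite (\<Union>j\<in>?C. {x. x < n \<and> x mod 6 = j})"
    by (rule finite_subset[of _ "{..<n}"]) auto
  ultimately have "card X \<le> card (\<Union>j\<in>?C. {x. x < n \<and> x mod 6 = j})" by (intro card_mono)
  also have "\<dots> \<le> (\<Sum>j\<in>?C. card {x. x < n \<and> x mod 6 = j})" by (rule card_UN_le[OF fin])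
  also have "\<dots> = (\<Sum>j\<in>?C. n div 6 + of_bool (j < n mod 6))"
    by (intro sum.cong refl card_residue_class) auto
  also have "\<dots> = card ?C * (n div 6) + card {j \<in> ?C. j < n mod 6}"
    using fin by (simp add: sum.distrib Int_def conj_commute)
  finally show ?thesis .
qed

lemma residue_graph_clique_block:
  assumes X: "X \<subseteq> {0..<n}" and clique: "\<forall>S. S \<subseteq> X \<and> card S = 3 \<longrightarrow> S \<in> residue_graph n"
    and "x \<in> X" "y \<in> X" "z \<in> X"
    and "x mod 6 \<noteq> y mod 6" "x mod 6 \<noteq> z mod 6" "y mod 6 \<noteq> z mod 6"
  shows "design_block (x mod 6) (y mod 6) (z mod 6)"
proof -
  have "x \<noteq> y" "x \<noteq> z" "y \<noteq> z" using assms by auto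
  moreover from this have "{x,y,z} \<in> residue_graph n" using clique assms by auto
  moreover have "x < n" "y < n" "z < n" using X assms(3-5) by auto
  ultimately show ?thesis
    using assms insert_mem_residue_graph[of x n y z] by (auto simp: residue_edge_def)
qed

lemma residue_graph_clique_residues:
  assumes X: "X \<subseteq> {0..<n}" and clique: "\<forall>S. S \<subseteq> X \<and> card S = 3 \<longrightarrow> S \<in> residue_graph n"
  shows "card ((\<lambda>x. x mod 6) ` X) \<le> 3"
    and "card ((\<lambda>x. x mod 6) ` X) = 3 \<Longrightarrow> \<not> (\<lambda>x. x mod 6) ` X \<subseteq> {..<3}"
proof -
  let ?C = "(\<lambda>x. x mod 6) ` X"
  note block = residue_graph_clique_block[OF X clique]
  show "card ?C \<le> 3"
  proof (rule ccontr)
    assume "\<not> card ?C \<le> 3"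
    then obtain D where D: "D \<subseteq> ?C" "card D = 4" using obtain_subset_with_card_n[of 4 ?C] by auto
    then obtain p q r s where pqrs: "D = {p,q,r,s}"
        "p \<noteq> q" "p \<noteq> r" "p \<noteq> s" "q \<noteq> r" "q \<noteq> s" "r \<noteq> s"
      using card_4_elim by blast
    obtain xp xq xr xs where "xp \<in> X" "xq \<in> X" "xr \<in> X" "xs \<in> X"
        "xp mod 6 = p" "xq mod 6 = q" "xr mod 6 = r" "xs mod 6 = s"
      using D(1) pqrs(1) by (auto simp: image_iff)
    thus False
      using block[of xp xq xr] block[of xp xq xs] block[of xp xr xs] block[of xq xr xs] pqrs
        no_design_block_on_4_residues[rule_format, of "xp mod 6" "xq mod 6" "xr mod 6" "xs mod 6"]
      by auto
  qed
  assume "card ?C = 3"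
  then obtain p q r where pqr: "?C = {p,q,r}" "p \<noteq> q" "q \<noteq> r" "p \<noteq> r"
    unfolding card_3_iff by blast
  hence "p \<in> ?C" "q \<in> ?C" "r \<in> ?C" by auto
  then obtain xp xq xr where "xp \<in> X" "xq \<in> X" "xr \<in> X" "xp mod 6 = p" "xq mod 6 = q" "xr mod 6 = r"
    by blast
  thus "\<not> ?C \<subseteq> {..<3}"
    using block[of xp xq xr] not_design_block_below_3[of p q r] pqr by auto
qed

lemma residue_graph_clique_card_le:
  assumes X: "X \<subseteq> {0..<n}" and clique: "\<forall>S. S \<subseteq> X \<and> card S = 3 \<longrightarrow> S \<in> residue_graph n"
  shows "card X \<le> h_bound n"
proof -
  let ?C = "(\<lambda>x. x mod 6) ` X"
  let ?k = "card {j \<in> ?C. j < n mod 6}"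
  have fin: "finite ?C" using finite_subset[OF X] by simp
  have "?k \<le> card ?C" using fin by (intro card_mono) auto
  moreover have "?k \<le> n mod 6"
    using card_mono[of "{..<n mod 6}" "{j \<in> ?C. j < n mod 6}"] by auto
  moreover have "?k \<le> 2" if "card ?C = 3" "n mod 6 = 3"
  proof (rule ccontr)
    assume "\<not> ?k \<le> 2"
    hence "{j \<in> ?C. j < 3} = ?C"
      using that fin \<open>?k \<le> card ?C\<close> by (intro card_subset_eq) auto
    thus False using residue_graph_clique_residues(2)[OF X clique that(1)] by auto
  qed
  ultimately show ?thesis
    using card_le_residue_classes[OF X] residue_graph_clique_residues(1)[OF X clique]
    by (intro h_bound_ge_if_residues_bounded) auto
qed

lemma hom_number_residue_graph:
  assumes "n \<ge> 4"
  shows "hom_number 3 {0..<n} (residue_graph n) = h_bound n"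
proof -
  interpret Q013_free "{0..<n}" "residue_graph n"
    using residue_graph_uniform residue_graph_Q_free by unfold_locales
  have "hom_number 3 {0..<n} (residue_graph n) \<le> h_bound n"
  proof (rule hom_number_le)
    fix X assume hom: "homogeneous 3 {0..<n} (residue_graph n) X"
    hence X: "X \<subseteq> {0..<n}" unfolding homogeneous_def by blast
    from hom consider "\<forall>S. S \<subseteq> X \<and> card S = 3 \<longrightarrow> S \<in> residue_graph n"
      | "\<forall>S. S \<subseteq> X \<and> card S = 3 \<longrightarrow> S \<notin> residue_graph n"
      unfolding homogeneous_def by blast
    thus "card X \<le> h_bound n"
    proof cases
      case 1
      thus ?thesis by (rule residue_graph_clique_card_le[OF X])
    next
      case 2
      have "h_bound n \<ge> 3" using assms unfolding h_bound_def by auto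
      thus ?thesis using coclique_card_le_3[OF X 2] by linarith
    qed
  qed simp
  thus ?thesis using hom_number_ge_h_bound by simp
qed

lemma nat_ceiling_succ_half: "nat \<lceil>(real n + 1) / 2\<rceil> = n div 2 + 1"
proof -
  have "real n = 2 * real (n div 2) + real (n mod 2)"
    by (metis div_mult_mod_eq of_nat_add of_nat_mult of_nat_numeral mult.commute)
  moreover have "real (n mod 2) \<le> 1" by simp
  ultimately have "\<lceil>(real n + 1) / 2\<rceil> = int (n div 2) + 1"
    by (intro ceiling_unique) (simp_all add: field_simps)
  thus ?thesis by simp
qed

theorem mainTheorem11:
  fixes n :: nat
  assumes "n \<ge> 4"
  shows "h_rnQ 3 n {(4,0),(4,1),(4,3)} =
           (if n mod 6 = 0 then n div 2 else nat \<lceil>(real n + 1) / 2\<rceil>)"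
proof -
  let ?Q = "{(4::nat, 0::nat), (4, 1), (4, 3)}"
  let ?S = "{hom_number 3 {0..<n} E | E. uniform_hypergraph 3 {0..<n} E \<and> Q_free {0..<n} E ?Q}"
  have "?S \<subseteq> (\<lambda>E. hom_number 3 {0..<n} E) ` Pow (Pow {0..<n})"
    by (auto simp: uniform_hypergraph_def)
  hence "finite ?S" by (rule finite_subset) simp
  moreover have "h_bound n \<le> y" if "y \<in> ?S" for y
    using that Q013_free.hom_number_ge_h_bound[unfolded Q013_free_def] by fastforce
  moreover have "h_bound n \<in> ?S"
    using hom_number_residue_graph[OF assms] residue_graph_uniform residue_graph_Q_free by force
  ultimately have "h_rnQ 3 n ?Q = h_bound n"
    unfolding h_rnQ_def by (intro Min_eqI)
  thus ?thesis unfolding h_bound_def nat_ceiling_succ_half by simp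
qed

end
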